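(* Under the standing assumptions, if $1/4<a<b/27+1/3$ and $\theta\in(\pi/2,\pi)$ satisfies $-1<\cos\theta<-\frac{1}{2\sqrt a}$, then $\zeta(\theta)<0$.
   Context: Standing assumptions: $a,b\in\mathbb{R}$ with $b>0$, $1+a+b>0$, $9-27a+b>0$, $2-8a+8a^2+ab\ne0$, $b+1-a\ne0$. Let $f^*(\zeta,\theta)=(\zeta+2\cos\theta)(2\zeta\cos\theta+1)+b\zeta-a(\zeta+2\cos\theta)^3$. Under these assumptions, for each $\theta\in(\pi/2,\pi)$ the polynomial $f^*(\cdot,\theta)$ has exactly one real zero in $(-1,1)$; denote it $w(\theta)$ and set $\zeta(\theta)=1/w(\theta)$ (taken as $\infty$ when $w(\theta)=0$). *)

theory Defs
  imports Complex_Main "HOL-Library.Extended_Real"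
begin

definition fstar :: "real \<Rightarrow> real \<Rightarrow> real \<Rightarrow> real \<Rightarrow> real" where
  "fstar a b z \<theta> = (z + 2 * cos \<theta>) * (2 * z * cos \<theta> + 1) + b * z - a * (z + 2 * cos \<theta>) ^ 3"

definition standing_assms :: "real \<Rightarrow> real \<Rightarrow> bool" where
  "standing_assms a b \<longleftrightarrow> b > 0 \<and> 1 + a + b > 0 \<and> 9 - 27 * a + b > 0
     \<and> 2 - 8 * a + 8 * a^2 + a * b \<noteq> 0 \<and> b + 1 - a \<noteq> 0"

definition wfun :: "real \<Rightarrow> real \<Rightarrow> real \<Rightarrow> real" where
  "wfun a b \<theta> = (THE z. -1 < z \<and> z < 1 \<and> fstar a b z \<theta> = 0)"

definition zetafun :: "real \<Rightarrow> real \<Rightarrow> real \<Rightarrow> ereal" where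
  "zetafun a b \<theta> = (if wfun a b \<theta> = 0 then \<infinity> else ereal (1 / wfun a b \<theta>))"

end

theory Submission
  imports Defs
begin

text \<open>Write \<open>c = cos \<theta>\<close> and \<open>g t = t\<^sup>2 - a t\<^sup>3\<close>. Then \<open>f\<^sup>*(0) = 2c(1 - 4ac\<^sup>2)\<close>,
  \<open>f\<^sup>*(1) = g(1 + 2c) + b\<close> and \<open>f\<^sup>*(-1) = -(g(1 - 2c) + b)\<close>. The hypothesis on \<open>cos \<theta>\<close>
  makes \<open>f\<^sup>*(0) > 0\<close>, and elementary bounds on \<open>g\<close> over \<open>[-1,1]\<close> and \<open>[1,3]\<close> give
  \<open>f\<^sup>*(-1) < 0 < f\<^sup>*(1)\<close>. Hence the zero \<open>w\<close> in \<open>(-1,1)\<close> already lies in \<open>(-1,0)\<close>,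
  and \<open>\<zeta> = 1/w < 0\<close>.\<close>

lemma cubic_root_unique_between:
  fixes P :: "real \<Rightarrow> real" and A B C D p q :: real
  assumes P: "\<And>x. P x = A*x^3 + B*x^2 + C*x + D"
    and "A \<le> 0" and "P (-1) < 0" and "0 < P 1"
    and "P p = 0" and "P q = 0"
    and p: "-1 < p" "p < 1" and q: "-1 < q" "q < 1"
  shows "p = q"
proof (rule ccontr)
  assume "p \<noteq> q"
  define k where "k = B + A*(p + q)"
  \<comment> \<open>The cofactor \<open>A x + k\<close> would be negative at -1 and positive at 1, impossible for slope \<open>A \<le> 0\<close>.\<close>
  have "(p - q) * (A*(p^2 + p*q + q^2) + B*(p + q) + C) = P p - P q"
    unfolding P by (simp add: algebra_simps power2_eq_square power3_eq_cube)
  with \<open>p \<noteq> q\<close> \<open>P p = 0\<close> \<open>P q = 0\<close> have quot: "A*(p^2 + p*q + q^2) + B*(p + q) + C = 0"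
    by simp
  have factor: "P x = (x - p) * (x - q) * (A*x + k)" for x
  proof -
    have "P x = (x - p) * (x - q) * (A*x + k)
        + (A*(p^2 + p*q + q^2) + B*(p + q) + C) * (x - p) + P p"
      unfolding P k_def by (simp add: algebra_simps power2_eq_square power3_eq_cube)
    with quot \<open>P p = 0\<close> show ?thesis by simp
  qed
  have "(1 + p) * (1 + q) * (k - A) < 0"
    using factor[of "-1"] \<open>P (-1) < 0\<close> by (simp add: algebra_simps)
  with p q have "k < A" by (simp add: mult_less_0_iff)
  have "0 < (1 - p) * (1 - q) * (k + A)"
    using factor[of 1] \<open>0 < P 1\<close> by (simp add: algebra_simps)
  moreover have "0 < (1 - p) * (1 - q)" using p q by simp
  ultimately have "- A < k" by (simp add: zero_less_mult_iff)
  with \<open>k < A\<close> \<open>A \<le> 0\<close> show False by linarith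
qed

lemma cubic_lower_bound_on_unit_interval:
  fixes a r :: real
  assumes "0 < a" and "-1 \<le> r" and "r \<le> 1"
  shows "min 0 (1 - a) \<le> r^2 - a*r^3"
proof -
  have g: "r^2 - a*r^3 = r^2 * (1 - a*r)"
    by (simp add: algebra_simps power2_eq_square power3_eq_cube)
  show ?thesis
  proof (cases "0 \<le> 1 - a*r")
    case True
    then have "0 \<le> r^2 * (1 - a*r)" by simp
    then show ?thesis by (simp add: g min_le_iff_disj)
  next
    case False
    have "r^2 \<le> 1" using assms by (simp add: abs_square_le_1)
    then have "1 - a*r \<le> r^2 * (1 - a*r)"
      using False by (simp add: mult_le_cancel_right2)
    moreover have "a*r \<le> a" using assms by simp
    ultimately show ?thesis by (simp add: g)
  qed
qed

lemma cubic_lower_bound_on_one_three: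
  fixes a t :: real
  assumes "1/4 < a" and "1 \<le> t" and "t \<le> 3"
  shows "min (1 - a) (9 - 27*a) \<le> t^2 - a*t^3"
proof -
  define H where "H = (t + 1) - a*(t^2 + t + 1)"
  define K where "K = (t + 3) - a*(t^2 + 3*t + 9)"
  have at_one: "t^2 - a*t^3 - (1 - a) = (t - 1) * H"
    unfolding H_def by (simp add: algebra_simps power2_eq_square power3_eq_cube)
  have at_three: "t^2 - a*t^3 - (9 - 27*a) = (t - 3) * K"
    unfolding K_def by (simp add: algebra_simps power2_eq_square power3_eq_cube)
  have "K - H = 2 - a*(2*t + 8)" unfolding H_def K_def by (simp add: algebra_simps)
  moreover have "10*a \<le> a*(2*t + 8)" using assms by simp
  ultimately have "K < H" using assms(1) by linarith
  show ?thesis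
  proof (cases "0 \<le> H")
    case True
    then have "0 \<le> (t - 1) * H" using assms by simp
    then show ?thesis using at_one by linarith
  next
    case False
    then have "0 \<le> (t - 3) * K" using \<open>K < H\<close> assms by (simp add: mult_nonpos_nonpos)
    then show ?thesis using at_three by linarith
  qed
qed

lemma fstar_cubic:
  "fstar a b z \<theta> = -a*z^3 + (2*cos \<theta> - 6*a*cos \<theta>)*z^2
     + (1 + 4*(cos \<theta>)^2 + b - 12*a*(cos \<theta>)^2)*z + (2*cos \<theta> - 8*a*(cos \<theta>)^3)"
  unfolding fstar_def by (simp add: algebra_simps power2_eq_square power3_eq_cube)

lemma fstar_at_zero: "fstar a b 0 \<theta> = 2 * cos \<theta> * (1 - 4*a*(cos \<theta>)^2)"
  unfolding fstar_def by (simp add: algebra_simps power2_eq_square power3_eq_cube)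

lemma fstar_at_one:
  "fstar a b 1 \<theta> = (1 + 2*cos \<theta>)^2 - a*(1 + 2*cos \<theta>)^3 + b"
  unfolding fstar_def by (simp add: algebra_simps power2_eq_square power3_eq_cube)

lemma fstar_at_minus_one:
  "fstar a b (-1) \<theta> = - ((1 - 2*cos \<theta>)^2 - a*(1 - 2*cos \<theta>)^3 + b)"
  unfolding fstar_def by (simp add: algebra_simps power2_eq_square power3_eq_cube)

lemma fstar_at_zero_pos:
  assumes "cos \<theta> < 0" and "1 < 4*a*(cos \<theta>)^2"
  shows "0 < fstar a b 0 \<theta>"
  using assms by (simp add: fstar_at_zero mult_neg_neg)

lemma fstar_at_one_pos:
  assumes "0 < a" and "0 < b" and "a < b + 1" and "-1 < cos \<theta>" and "cos \<theta> < 0"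
  shows "0 < fstar a b 1 \<theta>"
  using cubic_lower_bound_on_unit_interval[of a "1 + 2*cos \<theta>"] assms
  by (simp add: fstar_at_one)

lemma fstar_at_minus_one_neg:
  assumes "1/4 < a" and "0 < b" and "a < b/27 + 1/3" and "-1 < cos \<theta>" and "cos \<theta> < 0"
  shows "fstar a b (-1) \<theta> < 0"
  using cubic_lower_bound_on_one_three[of a "1 - 2*cos \<theta>"] assms
  by (simp add: fstar_at_minus_one)

lemma wfun_eqI:
  assumes "0 \<le> a" and "fstar a b (-1) \<theta> < 0" and "0 < fstar a b 1 \<theta>"
    and "-1 < w" and "w < 1" and "fstar a b w \<theta> = 0"
  shows "wfun a b \<theta> = w"
  unfolding wfun_def
proof (rule the_equality)
  show "-1 < w \<and> w < 1 \<and> fstar a b w \<theta> = 0" using assms by simp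
next
  fix z assume "-1 < z \<and> z < 1 \<and> fstar a b z \<theta> = 0"
  then show "z = w"
    using cubic_root_unique_between[where P = "\<lambda>z. fstar a b z \<theta>", OF fstar_cubic] assms
    by auto
qed

lemma lt_minus_inverse_two_sqrt_imp:
  assumes "0 < a" and "c < - 1 / (2 * sqrt a)"
  shows "c < 0" and "1 < 4*a*c^2"
proof -
  have "0 < sqrt a" using assms by simp
  then show "c < 0" using assms(2) by (smt (verit) divide_neg_pos)
  have "1 < -c * (2 * sqrt a)" using assms(2) \<open>0 < sqrt a\<close> by (simp add: field_simps)
  then have "1^2 < (-c * (2 * sqrt a))^2" by (intro power_strict_mono) auto
  then show "1 < 4*a*c^2" using assms(1) by (simp add: power_mult_distrib mult.commute)
qed

theorem mainTheorem12:
  fixes a b \<theta> :: real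
  assumes "standing_assms a b"
    and "1/4 < a" and "a < b/27 + 1/3"
    and "pi/2 < \<theta>" and "\<theta> < pi"
    and "-1 < cos \<theta>" and "cos \<theta> < - 1 / (2 * sqrt a)"
  shows "zetafun a b \<theta> < 0"
proof -
  have "0 < b" using assms(1) by (simp add: standing_assms_def)
  have "0 < a" using assms(2) by simp
  note cos_bounds = lt_minus_inverse_two_sqrt_imp[OF \<open>0 < a\<close> assms(7)]
  have at_zero: "0 < fstar a b 0 \<theta>" using fstar_at_zero_pos cos_bounds by blast
  have at_minus_one: "fstar a b (-1) \<theta> < 0"
    using fstar_at_minus_one_neg \<open>0 < b\<close> assms(2,3,6) cos_bounds by blast
  have at_one: "0 < fstar a b 1 \<theta>"
    using fstar_at_one_pos[of a b] \<open>0 < a\<close> \<open>0 < b\<close> assms(3,6) cos_bounds by simp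
  have "continuous_on {-1..0} (\<lambda>z. fstar a b z \<theta>)"
    unfolding fstar_def by (intro continuous_intros)
  then obtain w where w: "-1 \<le> w" "w \<le> 0" "fstar a b w \<theta> = 0"
    using IVT'[of "\<lambda>z. fstar a b z \<theta>" "-1" 0 0] at_minus_one at_zero by force
  then have "-1 < w" "w < 0" using at_minus_one at_zero by (auto simp: less_le)
  then have "wfun a b \<theta> = w"
    using wfun_eqI \<open>0 < a\<close> at_minus_one at_one w(3) by simp
  with \<open>w < 0\<close> show ?thesis by (simp add: zetafun_def)
qed

end
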